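(* Let $\mathcal{O}$ be an order in a number field $K$, and let $\mathfrak{m}_1,\mathfrak{m}_2$ be nonzero integral ideals of $\mathcal{O}$. Then: (1) $\{\mathfrak p \text{ prime}:\mathfrak{m}_1\subseteq\mathfrak{p}\}\subseteq\{\mathfrak p\text{ prime}:\mathfrak{m}_2\subseteq\mathfrak{p}\}$ if and only if $I_{\mathfrak{m}_2}(\mathcal{O})\subseteq I_{\mathfrak{m}_1}(\mathcal{O})$; (2) if $I_{\mathfrak{m}_2}(\mathcal{O})\subseteq I_{\mathfrak{m}_1}(\mathcal{O})$, then $J^*_{\mathfrak{m}_2}(\mathcal{O})\subseteq J^*_{\mathfrak{m}_1}(\mathcal{O})$; (3) for any nonzero $\mathcal{O}$-ideal $\mathfrak{m}$ there exists an invertible integral ideal $\widetilde{\mathfrak{m}}\in I^*(\mathcal{O})$ with $\widetilde{\mathfrak{m}}\subseteq\mathfrak{m}$ and $I_{\mathfrak{m}}(\mathcal{O})=I_{\widetilde{\mathfrak{m}}}(\mathcal{O})$ (and hence $J^*_{\mathfrak{m}}(\mathcal{O})=J^*_{\widetilde{\mathfrak{m}}}(\mathcal{O})$).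
   Context: An order is a subring of $K$ containing $1$ that is free of rank $[K:\mathbb Q]$ over $\mathbb Z$. In (1), $\mathfrak p$ ranges over prime ideals of $\mathcal O$. $I_{\mathfrak m}(\mathcal O)$ is the set of integral $\mathcal O$-ideals $\mathfrak a$ with $\mathfrak a+\mathfrak m=\mathcal O$; $I^*(\mathcal O)$ is the set of invertible integral ideals (integral $\mathfrak a$ with $\mathfrak a\mathfrak b=\gamma\mathcal O$ for some integral $\mathfrak b$ and nonzero $\gamma$). $J^*_{\mathfrak m}(\mathcal O)$ is the group of invertible fractional $\mathcal O$-ideals coprime to $\mathfrak m$, i.e. of the form $\mathfrak a\mathfrak b^{-1}$ with $\mathfrak a,\mathfrak b$ invertible integral ideals coprime to $\mathfrak m$ (fractional ideal: $\mathcal O$-submodule $\mathfrak a\subseteq K$ with $\lambda\mathfrak a\subseteq\mathcal O$ for some $\lambda\in K^\times$; invertible: $\mathfrak a\mathfrak b=\mathcal O$ for a fractional $\mathfrak b$). *)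

theory Defs
  imports Complex_Main
begin

text \<open>Number fields are modelled as subfields of the complex numbers (every number field
  embeds into \<complex>). Orders, ideals and fractional ideals are sets of complex numbers.\<close>

definition subfield :: "complex set \<Rightarrow> bool" where
  "subfield K \<longleftrightarrow> 0 \<in> K \<and> 1 \<in> K \<and>
     (\<forall>x\<in>K. \<forall>y\<in>K. x + y \<in> K \<and> x - y \<in> K \<and> x * y \<in> K) \<and>
     (\<forall>x\<in>K. x \<noteq> 0 \<longrightarrow> inverse x \<in> K)"

definition rat_basis :: "complex set \<Rightarrow> nat \<Rightarrow> (nat \<Rightarrow> complex) \<Rightarrow> bool" where
  "rat_basis K n b \<longleftrightarrow> (\<forall>i<n. b i \<in> K) \<and>
     (\<forall>c :: nat \<Rightarrow> rat. (\<Sum>i<n. of_rat (c i) * b i) = 0 \<longrightarrow> (\<forall>i<n. c i = 0)) \<and>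
     K = range (\<lambda>c :: nat \<Rightarrow> rat. \<Sum>i<n. of_rat (c i) * b i)"

definition int_basis :: "complex set \<Rightarrow> nat \<Rightarrow> (nat \<Rightarrow> complex) \<Rightarrow> bool" where
  "int_basis \<O> n b \<longleftrightarrow>
     (\<forall>c :: nat \<Rightarrow> int. (\<Sum>i<n. of_int (c i) * b i) = 0 \<longrightarrow> (\<forall>i<n. c i = 0)) \<and>
     \<O> = range (\<lambda>c :: nat \<Rightarrow> int. \<Sum>i<n. of_int (c i) * b i)"

definition number_field :: "complex set \<Rightarrow> bool" where
  "number_field K \<longleftrightarrow> subfield K \<and> (\<exists>n b. rat_basis K n b)"

definition order_in :: "complex set \<Rightarrow> complex set \<Rightarrow> bool" where
  "order_in \<O> K \<longleftrightarrow> \<O> \<subseteq> K \<and> 0 \<in> \<O> \<and> 1 \<in> \<O> \<and>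
     (\<forall>x\<in>\<O>. \<forall>y\<in>\<O>. x + y \<in> \<O> \<and> x - y \<in> \<O> \<and> x * y \<in> \<O>) \<and>
     (\<exists>n b b'. int_basis \<O> n b \<and> rat_basis K n b')"

definition ideal_of :: "complex set \<Rightarrow> complex set \<Rightarrow> bool" where
  "ideal_of \<O> I \<longleftrightarrow> I \<subseteq> \<O> \<and> 0 \<in> I \<and> (\<forall>x\<in>I. \<forall>y\<in>I. x + y \<in> I) \<and>
     (\<forall>r\<in>\<O>. \<forall>x\<in>I. r * x \<in> I)"

definition prime_ideal_of :: "complex set \<Rightarrow> complex set \<Rightarrow> bool" where
  "prime_ideal_of \<O> P \<longleftrightarrow> ideal_of \<O> P \<and> P \<noteq> \<O> \<and>
     (\<forall>x\<in>\<O>. \<forall>y\<in>\<O>. x * y \<in> P \<longrightarrow> x \<in> P \<or> y \<in> P)"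

definition set_sum :: "complex set \<Rightarrow> complex set \<Rightarrow> complex set" where
  "set_sum A B = {x + y | x y. x \<in> A \<and> y \<in> B}"

definition fideal_prod :: "complex set \<Rightarrow> complex set \<Rightarrow> complex set" where
  "fideal_prod A B = {(\<Sum>i<n. x i * y i) | (n::nat) x y. \<forall>i<n. x i \<in> A \<and> y i \<in> B}"

definition principal :: "complex set \<Rightarrow> complex \<Rightarrow> complex set" where
  "principal \<O> \<gamma> = {\<gamma> * x | x. x \<in> \<O>}"

definition I_coprime :: "complex set \<Rightarrow> complex set \<Rightarrow> complex set set" where
  "I_coprime \<O> m = {a. ideal_of \<O> a \<and> set_sum a m = \<O>}"

definition I_inv :: "complex set \<Rightarrow> complex set set" where
  "I_inv \<O> = {a. ideal_of \<O> a \<and>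
     (\<exists>b \<gamma>. ideal_of \<O> b \<and> \<gamma> \<noteq> 0 \<and> fideal_prod a b = principal \<O> \<gamma>)}"

definition frac_ideal :: "complex set \<Rightarrow> complex set \<Rightarrow> complex set \<Rightarrow> bool" where
  "frac_ideal \<O> K A \<longleftrightarrow> A \<subseteq> K \<and> 0 \<in> A \<and> (\<forall>x\<in>A. \<forall>y\<in>A. x + y \<in> A) \<and>
     (\<forall>r\<in>\<O>. \<forall>x\<in>A. r * x \<in> A) \<and> (\<exists>l\<in>K. l \<noteq> 0 \<and> (\<forall>x\<in>A. l * x \<in> \<O>))"

text \<open>Inverse of a fractional ideal: \<open>(\<O> : B) = {x \<in> K. x B \<subseteq> \<O>}\<close>
  (this is \<open>B\<^sup>-\<^sup>1\<close> when \<open>B\<close> is invertible).\<close>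
definition frac_inv :: "complex set \<Rightarrow> complex set \<Rightarrow> complex set \<Rightarrow> complex set" where
  "frac_inv \<O> K B = {x \<in> K. \<forall>y\<in>B. x * y \<in> \<O>}"

definition J_coprime :: "complex set \<Rightarrow> complex set \<Rightarrow> complex set \<Rightarrow> complex set set" where
  "J_coprime \<O> K m = {fideal_prod a (frac_inv \<O> K b) | a b.
     a \<in> I_inv \<O> \<and> a \<in> I_coprime \<O> m \<and> b \<in> I_inv \<O> \<and> b \<in> I_coprime \<O> m}"

end

theory Submission
  imports Defs
begin

text \<open>
  One half of (1) holds in every commutative ring: if \<open>a + m\<^sub>2 = \<O>\<close> but \<open>a + m\<^sub>1 \<noteq> \<O>\<close>,
  then a maximal ideal containing \<open>a + m\<^sub>1\<close> is prime, hence contains \<open>m\<^sub>2\<close> and \<open>a + m\<^sub>2\<close>.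

  Everything else rests on two properties of an order: every nonzero ideal contains a positive
  integer \<open>N\<close>, and \<open>\<O>/N\<O>\<close> is finite. By finiteness some power \<open>y\<^sup>n\<close> of every element is
  idempotent modulo \<open>N\<close>, so a prime \<open>P \<ni> N\<close> that misses \<open>y\<close> contains \<open>y\<^sup>n - 1\<close>, and then
  \<open>P + m\<^sub>2 = \<O>\<close> whenever \<open>y \<in> m\<^sub>2\<close>. This is the other half of (1).

  For (3) take \<open>N \<in> m\<close> and \<open>E \<in> m\<close> idempotent modulo \<open>N\<^sup>2\<close> such that \<open>a\<^sup>k E \<equiv> a\<^sup>k\<close> for every
  \<open>a \<in> m\<close> and some \<open>k > 0\<close> (glue the idempotent powers of finitely many residues together).
  Then \<open>z = N(1 - E) + E\<close> and \<open>z' = NE + (1 - E)\<close> satisfy \<open>z z' \<in> N(1 + N\<O>)\<close> and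
  \<open>z + z' = N + 1\<close>, which gives \<open>(z, N\<^sup>2)(z', N\<^sup>2) = N\<O>\<close>. So \<open>(z, N\<^sup>2) \<subseteq> m\<close> is invertible,
  and a prime containing it contains \<open>N\<close>, then \<open>E\<close>, then all of \<open>m\<close>; by (1) it is coprime to
  the same ideals as \<open>m\<close>. Part (2) is immediate because \<open>J\<^sup>*\<^sub>m\<close> depends on \<open>m\<close> only through
  \<open>I\<^sub>m\<close>.
\<close>

definition primes_over :: "complex set \<Rightarrow> complex set \<Rightarrow> complex set set" where
  "primes_over R m = {P. prime_ideal_of R P \<and> m \<subseteq> P}"

definition cong_mod :: "complex set \<Rightarrow> complex \<Rightarrow> complex \<Rightarrow> complex \<Rightarrow> bool" where
  "cong_mod R M x y \<longleftrightarrow> (\<exists>w\<in>R. x - y = M * w)"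

lemma J_coprime_mono: "I_coprime R m2 \<subseteq> I_coprime R m1 \<Longrightarrow> J_coprime R K m2 \<subseteq> J_coprime R K m1"
  unfolding J_coprime_def by blast

lemma fideal_prod_mem: "x \<in> A \<Longrightarrow> y \<in> B \<Longrightarrow> x * y \<in> fideal_prod A B"
  unfolding fideal_prod_def
  by (rule CollectI, rule exI[of _ 1], rule exI[of _ "\<lambda>_. x"], rule exI[of _ "\<lambda>_. y"]) simp

lemma fideal_prod_add:
  assumes "p \<in> fideal_prod A B" "q \<in> fideal_prod A B"
  shows "p + q \<in> fideal_prod A B"
proof -
  obtain k :: nat and x y where p: "p = (\<Sum>i<k. x i * y i)" "\<forall>i<k. x i \<in> A \<and> y i \<in> B"
    using assms(1) unfolding fideal_prod_def by blast
  obtain l :: nat and x' y' where q: "q = (\<Sum>i<l. x' i * y' i)" "\<forall>i<l. x' i \<in> A \<and> y' i \<in> B"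
    using assms(2) unfolding fideal_prod_def by blast
  define u where "u i = (if i < k then x i else x' (i - k))" for i
  define v where "v i = (if i < k then y i else y' (i - k))" for i
  have "(\<Sum>i<k + l. u i * v i) = (\<Sum>i<k. u i * v i) + (\<Sum>i=k..<k + l. u i * v i)"
    by (simp add: sum.atLeastLessThan_concat flip: atLeast0LessThan)
  also have "(\<Sum>i=k..<k + l. u i * v i) = (\<Sum>i=k..<k + l. x' (i - k) * y' (i - k))"
    unfolding u_def v_def by simp
  also have "\<dots> = q"
    using sum.shift_bounds_nat_ivl[of "\<lambda>i. x' (i - k) * y' (i - k)" 0 k l]
    by (simp add: q(1) atLeast0LessThan add.commute)
  also have "(\<Sum>i<k. u i * v i) = p"
    unfolding p(1) u_def v_def by simp
  finally have "(\<Sum>i<k + l. u i * v i) = p + q" .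
  moreover have "\<forall>i<k + l. u i \<in> A \<and> v i \<in> B"
    using p(2) q(2) unfolding u_def v_def by auto
  ultimately show ?thesis
    unfolding fideal_prod_def by (intro CollectI exI[of _ "k + l"] exI[of _ u] exI[of _ v]) simp
qed

lemma fideal_prod_subset:
  assumes "0 \<in> C" and add: "\<And>a b. a \<in> C \<Longrightarrow> b \<in> C \<Longrightarrow> a + b \<in> C"
    and mult: "\<And>x y. x \<in> A \<Longrightarrow> y \<in> B \<Longrightarrow> x * y \<in> C"
  shows "fideal_prod A B \<subseteq> C"
proof
  fix p assume "p \<in> fideal_prod A B"
  then obtain k :: nat and x y where p: "p = (\<Sum>i<k. x i * y i)" "\<forall>i<k. x i \<in> A \<and> y i \<in> B"
    unfolding fideal_prod_def by blast
  have "(\<Sum>i<j. x i * y i) \<in> C" if "j \<le> k" for j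
    using that by (induction j) (simp_all add: \<open>0 \<in> C\<close> add mult p(2))
  then show "p \<in> C" using p(1) by simp
qed

section \<open>Ideals of subrings of \<open>\<complex>\<close>\<close>

locale complex_subring =
  fixes R :: "complex set"
  assumes zero_mem [simp, intro]: "0 \<in> R"
    and one_mem [simp, intro]: "1 \<in> R"
    and add_mem [intro]: "x \<in> R \<Longrightarrow> y \<in> R \<Longrightarrow> x + y \<in> R"
    and diff_mem [intro]: "x \<in> R \<Longrightarrow> y \<in> R \<Longrightarrow> x - y \<in> R"
    and mult_mem [intro]: "x \<in> R \<Longrightarrow> y \<in> R \<Longrightarrow> x * y \<in> R"
begin

lemma uminus_mem [intro]: "x \<in> R \<Longrightarrow> - x \<in> R"
  using diff_mem[of 0 x] by simp

lemma of_int_mem [simp, intro]: "of_int k \<in> R"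
proof (induction k rule: int_induct[where k = 0])
  case (step1 i)
  then show ?case using add_mem[OF _ one_mem] by simp
next
  case (step2 i)
  then show ?case using diff_mem[OF _ one_mem] by simp
qed simp

lemma power_mem [intro]: "x \<in> R \<Longrightarrow> x ^ n \<in> R"
  by (induction n) auto

lemma sum_mem [intro]: "(\<And>i. i \<in> A \<Longrightarrow> f i \<in> R) \<Longrightarrow> sum f A \<in> R"
  by (induction A rule: infinite_finite_induct) (simp_all add: add_mem)

lemma principal_mem: "u \<in> R \<Longrightarrow> g * u \<in> principal R g"
  unfolding principal_def by blast

lemma set_sum_mem: "a \<in> A \<Longrightarrow> b \<in> B \<Longrightarrow> a + b \<in> set_sum A B"
  unfolding set_sum_def by blast

lemma ideal_subset: "ideal_of R I \<Longrightarrow> I \<subseteq> R"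
  and ideal_zero: "ideal_of R I \<Longrightarrow> 0 \<in> I"
  and ideal_add: "ideal_of R I \<Longrightarrow> x \<in> I \<Longrightarrow> y \<in> I \<Longrightarrow> x + y \<in> I"
  and ideal_mult_left: "ideal_of R I \<Longrightarrow> r \<in> R \<Longrightarrow> x \<in> I \<Longrightarrow> r * x \<in> I"
  unfolding ideal_of_def by auto

lemma ideal_mult_right: "ideal_of R I \<Longrightarrow> r \<in> R \<Longrightarrow> x \<in> I \<Longrightarrow> x * r \<in> I"
  using ideal_mult_left by (simp add: mult.commute)

lemma ideal_uminus: "ideal_of R I \<Longrightarrow> x \<in> I \<Longrightarrow> - x \<in> I"
  using ideal_mult_left[of I "- 1" x] uminus_mem[OF one_mem] by simp

lemma ideal_diff: "ideal_of R I \<Longrightarrow> x \<in> I \<Longrightarrow> y \<in> I \<Longrightarrow> x - y \<in> I"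
  using ideal_add[of I x "- y"] ideal_uminus[of I y] by simp

lemma ideal_power:
  assumes I: "ideal_of R I" and x: "x \<in> I"
  shows "n > 0 \<Longrightarrow> x ^ n \<in> I"
proof (induction n)
  case (Suc n)
  have "x \<in> R" using ideal_subset[OF I] x by blast
  with Suc x show ?case
    by (cases "n = 0") (simp_all add: ideal_mult_left[OF I])
qed simp

lemma ideal_eq_if_one_mem:
  assumes I: "ideal_of R I" and one: "1 \<in> I"
  shows "I = R"
proof
  show "I \<subseteq> R" using ideal_subset[OF I] .
  show "R \<subseteq> I" using ideal_mult_left[OF I _ one] by (simp add: subset_iff)
qed

lemma ideal_principal:
  assumes g: "g \<in> R"
  shows "ideal_of R (principal R g)"
  unfolding ideal_of_def
proof (intro conjI ballI)
  show "principal R g \<subseteq> R"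
    unfolding principal_def using g by blast
  show "0 \<in> principal R g"
    using principal_mem[OF zero_mem, of g] by simp
next
  fix u v assume "u \<in> principal R g" "v \<in> principal R g"
  then obtain a b where "u = g * a" "v = g * b" "a \<in> R" "b \<in> R"
    unfolding principal_def by blast
  then show "u + v \<in> principal R g"
    using principal_mem[OF add_mem[OF \<open>a \<in> R\<close> \<open>b \<in> R\<close>], of g] by (simp add: distrib_left)
next
  fix r u assume "r \<in> R" "u \<in> principal R g"
  then obtain a where "u = g * a" "a \<in> R"
    unfolding principal_def by blast
  then show "r * u \<in> principal R g"
    using principal_mem[OF mult_mem[OF \<open>r \<in> R\<close> \<open>a \<in> R\<close>], of g] by (simp add: mult.left_commute)
qed

lemma ideal_set_sum:
  assumes A: "ideal_of R A" and B: "ideal_of R B"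
  shows "ideal_of R (set_sum A B)"
  unfolding ideal_of_def
proof (intro conjI ballI)
  show "set_sum A B \<subseteq> R"
    using ideal_subset[OF A] ideal_subset[OF B] unfolding set_sum_def by blast
  show "0 \<in> set_sum A B"
    using set_sum_mem[OF ideal_zero[OF A] ideal_zero[OF B]] by simp
next
  fix u v assume "u \<in> set_sum A B" "v \<in> set_sum A B"
  then obtain a b a' b' where "u = a + b" "v = a' + b'" "a \<in> A" "b \<in> B" "a' \<in> A" "b' \<in> B"
    unfolding set_sum_def by blast
  then show "u + v \<in> set_sum A B"
    using set_sum_mem[OF ideal_add[OF A] ideal_add[OF B]] by (simp add: add_ac)
next
  fix r u assume "r \<in> R" "u \<in> set_sum A B"
  then obtain a b where "u = a + b" "a \<in> A" "b \<in> B"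
    unfolding set_sum_def by blast
  then show "r * u \<in> set_sum A B"
    using set_sum_mem[OF ideal_mult_left[OF A] ideal_mult_left[OF B]] \<open>r \<in> R\<close>
    by (simp add: distrib_left)
qed

lemma set_sum_subset: "ideal_of R P \<Longrightarrow> A \<subseteq> P \<Longrightarrow> B \<subseteq> P \<Longrightarrow> set_sum A B \<subseteq> P"
  unfolding set_sum_def using ideal_add by blast

lemma subset_set_sum_left: "ideal_of R B \<Longrightarrow> A \<subseteq> set_sum A B"
  using set_sum_mem[OF _ ideal_zero] by fastforce

lemma subset_set_sum_right: "ideal_of R A \<Longrightarrow> B \<subseteq> set_sum A B"
  using set_sum_mem[OF ideal_zero] by fastforce

lemma set_sum_eq_carrier:
  assumes A: "ideal_of R A" and B: "ideal_of R B"
    and "a \<in> A" "b \<in> B" "a + b = 1"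
  shows "set_sum A B = R"
  using ideal_eq_if_one_mem[OF ideal_set_sum[OF A B]] set_sum_mem[OF assms(3,4)] assms(5) by simp

section \<open>Prime ideals\<close>

lemma prime_ideal_one_not_mem: "prime_ideal_of R P \<Longrightarrow> 1 \<notin> P"
  unfolding prime_ideal_of_def using ideal_eq_if_one_mem[of P] by auto

lemma prime_ideal_power_mem:
  assumes P: "prime_ideal_of R P" and x: "x \<in> R"
  shows "x ^ n \<in> P \<Longrightarrow> x \<in> P"
proof (induction n)
  case 0
  then show ?case using prime_ideal_one_not_mem[OF P] by simp
next
  case (Suc n)
  then have "x * x ^ n \<in> P" by simp
  then have "x \<in> P \<or> x ^ n \<in> P"
    using P x power_mem[OF x] unfolding prime_ideal_of_def by blast
  with Suc.IH show ?case by blast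
qed

lemma ideal_Union_chain:
  assumes C: "subset.chain {Q. ideal_of R Q} C" and "C \<noteq> {}"
  shows "ideal_of R (\<Union>C)"
  unfolding ideal_of_def
proof (intro conjI ballI)
  have ideals: "\<And>Q. Q \<in> C \<Longrightarrow> ideal_of R Q"
    using C unfolding subset_chain_def by blast
  show "\<Union>C \<subseteq> R" using ideals ideal_subset by blast
  show "0 \<in> \<Union>C" using ideals ideal_zero \<open>C \<noteq> {}\<close> by blast
  show "r * x \<in> \<Union>C" if "r \<in> R" "x \<in> \<Union>C" for r x
    using ideals ideal_mult_left that by blast
  fix x y assume "x \<in> \<Union>C" "y \<in> \<Union>C"
  then obtain X Y where XY: "X \<in> C" "Y \<in> C" "x \<in> X" "y \<in> Y" by blast
  moreover have "X \<subseteq> Y \<or> Y \<subseteq> X" using C XY(1,2) unfolding subset_chain_def by blast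
  ultimately show "x + y \<in> \<Union>C" using ideals ideal_add by blast
qed

lemma exists_maximal_ideal:
  assumes A: "ideal_of R A" "1 \<notin> A"
  obtains P where "ideal_of R P" "1 \<notin> P" "A \<subseteq> P"
    "\<forall>Q. ideal_of R Q \<and> 1 \<notin> Q \<and> P \<subseteq> Q \<longrightarrow> Q = P"
proof -
  define \<A> where "\<A> = {Q. ideal_of R Q \<and> 1 \<notin> Q \<and> A \<subseteq> Q}"
  have "\<exists>U\<in>\<A>. \<forall>X\<in>C. X \<subseteq> U" if C: "subset.chain \<A> C" for C
  proof (cases "C = {}")
    case True
    have "A \<in> \<A>" using A unfolding \<A>_def by simp
    with True show ?thesis by blast
  next
    case False
    have CA: "C \<subseteq> \<A>" using C unfolding subset_chain_def by simp
    have "subset.chain {Q. ideal_of R Q} C"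
      using C CA unfolding \<A>_def subset_chain_def by auto
    then have "ideal_of R (\<Union>C)" using ideal_Union_chain False by simp
    moreover have "1 \<notin> \<Union>C" using CA unfolding \<A>_def by auto
    moreover have "A \<subseteq> \<Union>C" using CA False unfolding \<A>_def by auto
    ultimately have "\<Union>C \<in> \<A>" unfolding \<A>_def by simp
    then show ?thesis by auto
  qed
  then obtain P where P: "P \<in> \<A>" and max: "\<forall>X\<in>\<A>. P \<subseteq> X \<longrightarrow> X = P"
    using subset_Zorn[of \<A>] by auto
  show thesis
  proof (rule that)
    show "ideal_of R P" "1 \<notin> P" "A \<subseteq> P" using P unfolding \<A>_def by auto
    then show "\<forall>Q. ideal_of R Q \<and> 1 \<notin> Q \<and> P \<subseteq> Q \<longrightarrow> Q = P"
      using max unfolding \<A>_def by auto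
  qed
qed

lemma maximal_ideal_prime:
  assumes P: "ideal_of R P" "1 \<notin> P"
    and max: "\<forall>Q. ideal_of R Q \<and> 1 \<notin> Q \<and> P \<subseteq> Q \<longrightarrow> Q = P"
  shows "prime_ideal_of R P"
proof -
  have "x \<in> P \<or> y \<in> P" if xy: "x \<in> R" "y \<in> R" "x * y \<in> P" for x y
  proof (cases "x \<in> P")
    case False
    define Q where "Q = set_sum P (principal R x)"
    have Q: "ideal_of R Q"
      unfolding Q_def using ideal_set_sum[OF P(1) ideal_principal[OF xy(1)]] .
    have "x \<in> Q"
      unfolding Q_def using set_sum_mem[OF ideal_zero[OF P(1)] principal_mem[OF one_mem]] by simp
    then have "1 \<in> Q"
      using max Q subset_set_sum_left[OF ideal_principal[OF xy(1)]] False
      unfolding Q_def by blast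
    then obtain p r where pr: "1 = p + x * r" "p \<in> P" "r \<in> R"
      unfolding Q_def set_sum_def principal_def by blast
    have "y = y * (p + x * r)" using pr(1) by simp
    also have "\<dots> = y * p + r * (x * y)" by (simp add: algebra_simps)
    also have "\<dots> \<in> P"
      using ideal_add[OF P(1) ideal_mult_left[OF P(1) xy(2) pr(2)] ideal_mult_left[OF P(1) pr(3) xy(3)]] .
    finally show ?thesis by simp
  qed simp
  moreover have "P \<noteq> R" using P(2) by blast
  ultimately show ?thesis using P(1) unfolding prime_ideal_of_def by blast
qed

lemma exists_prime_ideal_above:
  assumes "ideal_of R A" "A \<noteq> R"
  obtains P where "prime_ideal_of R P" "A \<subseteq> P"
proof -
  have "1 \<notin> A" using assms ideal_eq_if_one_mem by blast
  then obtain P where P: "ideal_of R P" "1 \<notin> P" "A \<subseteq> P"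
    "\<forall>Q. ideal_of R Q \<and> 1 \<notin> Q \<and> P \<subseteq> Q \<longrightarrow> Q = P"
    using exists_maximal_ideal[OF assms(1)] by blast
  show thesis using that[OF maximal_ideal_prime[OF P(1,2,4)] P(3)] .
qed

lemma coprime_subset_if_primes_over_subset:
  assumes m1: "ideal_of R m1" and V: "primes_over R m1 \<subseteq> primes_over R m2"
  shows "I_coprime R m2 \<subseteq> I_coprime R m1"
proof
  fix a assume "a \<in> I_coprime R m2"
  then have a: "ideal_of R a" "set_sum a m2 = R" unfolding I_coprime_def by auto
  have "set_sum a m1 = R"
  proof (rule ccontr)
    assume "set_sum a m1 \<noteq> R"
    then obtain P where P: "prime_ideal_of R P" "set_sum a m1 \<subseteq> P"
      using exists_prime_ideal_above[OF ideal_set_sum[OF a(1) m1]] by blast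
    then have "a \<subseteq> P" "m1 \<subseteq> P"
      using subset_set_sum_left[OF m1] subset_set_sum_right[OF a(1)] by blast+
    then have "set_sum a m2 \<subseteq> P"
      using V P(1) set_sum_subset[of P a m2] unfolding primes_over_def prime_ideal_of_def by blast
    then show False using a(2) prime_ideal_one_not_mem[OF P(1)] one_mem by blast
  qed
  then show "a \<in> I_coprime R m1" using a(1) unfolding I_coprime_def by blast
qed

section \<open>Congruences and idempotents\<close>

lemma cong_mod_refl: "cong_mod R M x x"
  unfolding cong_mod_def using zero_mem by force

lemma cong_mod_sym:
  assumes "cong_mod R M x y"
  shows "cong_mod R M y x"
proof -
  obtain w where "w \<in> R" "x - y = M * w" using assms unfolding cong_mod_def by blast
  then have "- w \<in> R" "y - x = M * (- w)" using uminus_mem by (auto simp: algebra_simps)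
  then show ?thesis unfolding cong_mod_def by blast
qed

lemma cong_mod_trans:
  assumes "cong_mod R M x y" "cong_mod R M y z"
  shows "cong_mod R M x z"
proof -
  obtain w w' where "w \<in> R" "x - y = M * w" "w' \<in> R" "y - z = M * w'"
    using assms unfolding cong_mod_def by blast
  then have "w + w' \<in> R" "x - z = M * (w + w')" using add_mem by (auto simp: algebra_simps)
  then show ?thesis unfolding cong_mod_def by blast
qed

lemma cong_mod_mult:
  assumes "r \<in> R" "cong_mod R M x y"
  shows "cong_mod R M (r * x) (r * y)"
proof -
  obtain w where "w \<in> R" "x - y = M * w" using assms(2) unfolding cong_mod_def by blast
  moreover have "r * x - r * y = r * (x - y)" by (simp add: algebra_simps)
  ultimately have "r * w \<in> R" "r * x - r * y = M * (r * w)"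
    using mult_mem[OF assms(1)] by (auto simp: mult.left_commute)
  then show ?thesis unfolding cong_mod_def by blast
qed

lemma cong_mod_power:
  assumes "x \<in> R" "y \<in> R" "cong_mod R M x y"
  shows "cong_mod R M (x ^ k) (y ^ k)"
proof (induction k)
  case 0
  then show ?case using cong_mod_refl by simp
next
  case (Suc k)
  have "cong_mod R M (x * x ^ k) (x * y ^ k)" using cong_mod_mult[OF assms(1) Suc] .
  moreover have "cong_mod R M (y ^ k * x) (y ^ k * y)"
    using cong_mod_mult[OF power_mem[OF assms(2)] assms(3)] .
  ultimately show ?case using cong_mod_trans by (simp add: mult.commute)
qed

lemma idempotent_mod_join:
  assumes "M \<in> R" "E \<in> R" "e \<in> R" "cong_mod R M (E ^ 2) E" "cong_mod R M (e ^ 2) e"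
  shows "cong_mod R M ((E + e - E * e) ^ 2) (E + e - E * e)"
proof -
  \<comment> \<open>\<open>E + e - E e = 1 - (1 - E)(1 - e)\<close>\<close>
  obtain \<alpha> \<beta> where \<alpha>\<beta>: "\<alpha> \<in> R" "E ^ 2 - E = M * \<alpha>" "\<beta> \<in> R" "e ^ 2 - e = M * \<beta>"
    using assms(4,5) unfolding cong_mod_def by blast
  moreover have "(E + e - E * e) ^ 2 - (E + e - E * e)
      = (E ^ 2 - E) * (e ^ 2 - e) + (E ^ 2 - E) * (1 - e) + (e ^ 2 - e) * (1 - E)"
    by (simp add: algebra_simps power2_eq_square)
  ultimately have "(E + e - E * e) ^ 2 - (E + e - E * e) = M * (M * \<alpha> * \<beta> + \<alpha> * (1 - e) + \<beta> * (1 - E))"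
    by (simp add: algebra_simps)
  moreover have "M * \<alpha> * \<beta> + \<alpha> * (1 - e) + \<beta> * (1 - E) \<in> R"
    using assms(1-3) \<alpha>\<beta>(1,3) by (intro add_mem mult_mem diff_mem one_mem)
  ultimately show ?thesis unfolding cong_mod_def by blast
qed

lemma absorbs_mod_join:
  assumes "e \<in> R" "cong_mod R M (x * E) x"
  shows "cong_mod R M (x * (E + e - E * e)) x"
proof -
  obtain w where "w \<in> R" "x * E - x = M * w" using assms(2) unfolding cong_mod_def by blast
  moreover have "x * (E + e - E * e) - x = (x * E - x) * (1 - e)" by (simp add: algebra_simps)
  ultimately have "w * (1 - e) \<in> R" "x * (E + e - E * e) - x = M * (w * (1 - e))"
    using assms(1) by (auto intro!: mult_mem diff_mem)
  then show ?thesis unfolding cong_mod_def by blast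
qed

section \<open>An invertible ideal with two generators\<close>

lemma principal_subset_ideal: "ideal_of R m \<Longrightarrow> g \<in> m \<Longrightarrow> principal R g \<subseteq> m"
  unfolding principal_def using ideal_mult_right by blast

lemma two_generated_mem:
  assumes "g \<in> R" "h \<in> R" "u \<in> R"
  shows "g * u \<in> set_sum (principal R g) (principal R h)"
    and "h * u \<in> set_sum (principal R g) (principal R h)"
  using subset_set_sum_left[OF ideal_principal[OF assms(2)]]
    subset_set_sum_right[OF ideal_principal[OF assms(1)]] principal_mem[OF assms(3)]
  by blast+

lemma two_generated_prod_subset_principal:
  assumes mem: "z \<in> R" "z' \<in> R" "n \<in> R" "t \<in> R" and prod: "z * z' = n * (1 + n * t)"
  shows "fideal_prod (set_sum (principal R z) (principal R (n * n)))
      (set_sum (principal R z') (principal R (n * n))) \<subseteq> principal R n"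
proof (rule fideal_prod_subset)
  show "0 \<in> principal R n"
    and "\<And>a b. a \<in> principal R n \<Longrightarrow> b \<in> principal R n \<Longrightarrow> a + b \<in> principal R n"
    using ideal_zero ideal_add ideal_principal[OF mem(3)] by blast+
next
  fix x y
  assume "x \<in> set_sum (principal R z) (principal R (n * n))"
    and "y \<in> set_sum (principal R z') (principal R (n * n))"
  then obtain u v u' v' where uv: "x = z * u + n * n * v" "y = z' * u' + n * n * v'"
      "u \<in> R" "v \<in> R" "u' \<in> R" "v' \<in> R"
    unfolding set_sum_def principal_def by blast
  define w where "w = (1 + n * t) * u * u' + n * (z * u * v' + v * z' * u' + n * n * v * v')"
  have "x * y = z * z' * u * u' + n * (n * (z * u * v' + v * z' * u' + n * n * v * v'))"
    unfolding uv(1,2) by (simp add: algebra_simps)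
  also have "\<dots> = n * w" unfolding prod w_def by (simp add: algebra_simps)
  finally have "x * y = n * w" .
  moreover have "w \<in> R" unfolding w_def using mem uv(3-6) by (intro add_mem mult_mem one_mem)
  ultimately show "x * y \<in> principal R n" using principal_mem by simp
qed

lemma principal_subset_two_generated_prod:
  assumes mem: "z \<in> R" "z' \<in> R" "n \<in> R" "t \<in> R"
    and prod: "z * z' = n * (1 + n * t)" and sum: "z + z' = n + 1"
  shows "principal R n \<subseteq> fideal_prod (set_sum (principal R z) (principal R (n * n)))
      (set_sum (principal R z') (principal R (n * n)))"
    (is "_ \<subseteq> fideal_prod ?I ?J")
proof
  have nn: "n * n \<in> R" using mult_mem[OF mem(3) mem(3)] .
  note I = two_generated_mem[OF mem(1) nn] and J = two_generated_mem[OF mem(2) nn]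
  fix x assume "x \<in> principal R n"
  then obtain y where y: "x = n * y" "y \<in> R" unfolding principal_def by blast
  define c where "c = t * y * (n - 1)"
  have "z * (z' * y) + z * (n * n * c) + n * n * c * z' + n * n * (n * n * (- (t * y)))
      = z * z' * y + n * n * c * (z + z') - n * n * n * n * t * y"
    by (simp add: algebra_simps)
  also have "\<dots> = n * y" unfolding prod sum c_def by (simp add: algebra_simps)
  finally have eq: "n * y = z * (z' * y) + z * (n * n * c) + n * n * c * z' + n * n * (n * n * (- (t * y)))"
    by simp
  have c: "c \<in> R" unfolding c_def using mem y(2) by (intro mult_mem diff_mem one_mem)
  have ty: "- (t * y) \<in> R" using mem y(2) by (intro uminus_mem mult_mem)
  have "z \<in> ?I" "n * n \<in> ?I" "n * n * c \<in> ?I"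
    using I(1)[OF one_mem] I(2)[OF one_mem] I(2)[OF c] by simp_all
  moreover have "z' \<in> ?J" "z' * y \<in> ?J" "n * n * c \<in> ?J" "n * n * (- (t * y)) \<in> ?J"
    using J(1)[OF one_mem] J(1)[OF y(2)] J(2)[OF c] J(2)[OF ty] by simp_all
  ultimately have "n * y \<in> fideal_prod ?I ?J"
    unfolding eq by (intro fideal_prod_add fideal_prod_mem)
  then show "x \<in> fideal_prod ?I ?J" using y(1) by simp
qed

lemma two_generated_invertible:
  assumes n: "n \<in> R" "n \<noteq> 0" and E: "E \<in> R" "cong_mod R (n * n) (E ^ 2) E"
  shows "set_sum (principal R (n * (1 - E) + E)) (principal R (n * n)) \<in> I_inv R"
proof -
  obtain \<sigma> where \<sigma>: "\<sigma> \<in> R" "E ^ 2 - E = n * n * \<sigma>"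
    using E(2) unfolding cong_mod_def by blast
  define z where "z = n * (1 - E) + E"
  define z' where "z' = n * E + (1 - E)"
  define t where "t = 2 * n * \<sigma> - \<sigma> - n * n * \<sigma>"
  have "z * z' = n * (1 - 2 * E + 2 * E ^ 2) + (1 + n * n) * (E - E ^ 2)"
    unfolding z_def z'_def by (simp add: algebra_simps power2_eq_square)
  also have "\<dots> = n * (1 + n * t)"
    using \<sigma>(2) unfolding t_def by (simp add: algebra_simps)
  finally have prod: "z * z' = n * (1 + n * t)" .
  have sum: "z + z' = n + 1" unfolding z_def z'_def by (simp add: algebra_simps)
  have mem: "z \<in> R" "z' \<in> R" "n * n \<in> R" "t \<in> R"
    unfolding z_def z'_def t_def using n(1) E(1) \<sigma>(1) of_int_mem[of 2]
    by (auto intro!: add_mem diff_mem mult_mem)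
  have "ideal_of R (set_sum (principal R z) (principal R (n * n)))"
    "ideal_of R (set_sum (principal R z') (principal R (n * n)))"
    using ideal_set_sum ideal_principal mem by blast+
  then show ?thesis
    using two_generated_prod_subset_principal[OF mem(1,2) n(1) mem(4) prod]
      principal_subset_two_generated_prod[OF mem(1,2) n(1) mem(4) prod sum] n(2)
    unfolding I_inv_def z_def by blast
qed

lemma primes_over_two_generated_subset:
  assumes m: "ideal_of R m" and n: "n \<in> R" and E: "E \<in> R"
    and absorb: "\<forall>a\<in>m. \<exists>k>0. cong_mod R (n * n) (a ^ k * E) (a ^ k)"
  shows "primes_over R (set_sum (principal R (n * (1 - E) + E)) (principal R (n * n)))
    \<subseteq> primes_over R m"
    (is "primes_over R ?I \<subseteq> _")
proof
  fix P assume "P \<in> primes_over R ?I"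
  then have P: "prime_ideal_of R P" "?I \<subseteq> P" unfolding primes_over_def by auto
  have PI: "ideal_of R P" using P(1) unfolding prime_ideal_of_def by blast
  have z: "n * (1 - E) + E \<in> R" using n E by (intro add_mem mult_mem diff_mem one_mem)
  have "n * (1 - E) + E \<in> ?I" "n * n \<in> ?I"
    using two_generated_mem[OF z mult_mem[OF n n] one_mem] by simp_all
  then have "n ^ 2 \<in> P" "n * (1 - E) + E \<in> P" using P(2) by (auto simp: power2_eq_square)
  then have "n \<in> P" "n * (1 - E) + E \<in> P" using prime_ideal_power_mem[OF P(1) n] by auto
  then have EP: "E \<in> P"
    using ideal_diff[OF PI _ ideal_mult_right[OF PI _ \<open>n \<in> P\<close>], of "n * (1 - E) + E" "1 - E"] E
    by (simp add: diff_mem)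
  have "m \<subseteq> P"
  proof
    fix a assume a: "a \<in> m"
    then obtain k w where k: "k > 0" "w \<in> R" "a ^ k * E - a ^ k = n * n * w"
      using absorb unfolding cong_mod_def by blast
    have aR: "a \<in> R" using a ideal_subset[OF m] by blast
    have "a ^ k * E - n * n * w \<in> P"
      using ideal_diff[OF PI ideal_mult_left[OF PI power_mem[OF aR] EP]
          ideal_mult_right[OF PI _ ideal_mult_left[OF PI n \<open>n \<in> P\<close>]]] k(2) .
    then have "a ^ k \<in> P" using k(3) by (simp add: algebra_simps)
    then show "a \<in> P" using prime_ideal_power_mem[OF P(1) aR] by blast
  qed
  then show "P \<in> primes_over R m" using P(1) unfolding primes_over_def by blast
qed

end

section \<open>Subrings with finite residue rings\<close>

locale finite_residue_subring = complex_subring +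
  assumes finite_residues:
      "M > 0 \<Longrightarrow> \<exists>F. finite F \<and> (\<forall>y\<in>R. \<exists>f\<in>F. cong_mod R (of_int M) y f)"
    and divides_nonzero_int:
      "x \<in> R \<Longrightarrow> x \<noteq> 0 \<Longrightarrow> \<exists>D w. D \<noteq> (0::int) \<and> w \<in> R \<and> of_int D = x * w"
begin

lemma ideal_contains_pos_int:
  assumes m: "ideal_of R m" "m \<noteq> {0}"
  obtains N :: int where "N > 0" "of_int N \<in> m"
proof -
  obtain x where x: "x \<in> m" "x \<noteq> 0" using m ideal_zero by blast
  then obtain D w where D: "D \<noteq> 0" "w \<in> R" "of_int D = x * w"
    using divides_nonzero_int ideal_subset[OF m(1)] by blast
  then have "of_int D \<in> m" using ideal_mult_right[OF m(1) D(2) x(1)] by simp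
  moreover have "of_int (- D) \<in> m" using ideal_uminus[OF m(1) calculation] by simp
  moreover have "D > 0 \<or> - D > 0" using D(1) by linarith
  ultimately show thesis using that by blast
qed

lemma exists_cong_powers:
  assumes "M > 0" "a \<in> R"
  obtains i j where "i < j" "cong_mod R (of_int M) (a ^ i) (a ^ j)"
proof -
  obtain F where F: "finite F" "\<forall>y\<in>R. \<exists>f\<in>F. cong_mod R (of_int M) y f"
    using finite_residues assms(1) by blast
  define g where "g k = (SOME f. f \<in> F \<and> cong_mod R (of_int M) (a ^ k) f)" for k
  have g: "g k \<in> F \<and> cong_mod R (of_int M) (a ^ k) (g k)" for k
    unfolding g_def by (rule someI_ex) (use F(2) power_mem[OF assms(2)] in blast)
  have "\<not> inj g"
  proof
    assume "inj g"
    then have "finite (UNIV :: nat set)" using inj_on_finite[of g UNIV F] g F(1) by blast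
    then show False by simp
  qed
  then obtain i j where "g i = g j" "i \<noteq> j" unfolding inj_def by blast
  have "cong_mod R (of_int M) (a ^ i) (g j)" using g[of i] \<open>g i = g j\<close> by simp
  then have "cong_mod R (of_int M) (a ^ i) (a ^ j)"
    using cong_mod_trans[OF _ cong_mod_sym] g[of j] by blast
  then show thesis
    using that cong_mod_sym \<open>i \<noteq> j\<close> by (metis linorder_neqE_nat)
qed

lemma power_idempotent_mod:
  assumes "M > 0" "a \<in> R"
  obtains n where "n > 0" "cong_mod R (of_int M) (a ^ (2 * n)) (a ^ n)"
proof -
  obtain i j where ij: "i < j" "cong_mod R (of_int M) (a ^ i) (a ^ j)"
    using exists_cong_powers assms by blast
  define p where "p = j - i"
  have period: "cong_mod R (of_int M) (a ^ (k + p * q)) (a ^ k)" if "k \<ge> i" for k q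
  proof (induction q)
    case 0
    then show ?case using cong_mod_refl by simp
  next
    case (Suc q)
    have "cong_mod R (of_int M) (a ^ (k + p * q - i) * a ^ j) (a ^ (k + p * q - i) * a ^ i)"
      using cong_mod_mult[OF power_mem[OF assms(2)] cong_mod_sym[OF ij(2)]] .
    moreover have "k + p * q - i + j = k + p * Suc q" "k + p * q - i + i = k + p * q"
      using that ij(1) unfolding p_def by auto
    ultimately have "cong_mod R (of_int M) (a ^ (k + p * Suc q)) (a ^ (k + p * q))"
      by (metis power_add)
    then show ?case using cong_mod_trans[OF _ Suc] by blast
  qed
  define n where "n = p * (i + 1)"
  have "p > 0" using ij(1) unfolding p_def by simp
  then have "n > 0" "n \<ge> i"
    unfolding n_def using mult_le_mono1[of 1 p "i + 1"] by auto
  moreover have "n + p * (i + 1) = 2 * n" unfolding n_def by simp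
  ultimately show thesis using that period[of n "i + 1"] by metis
qed

lemma prime_power_minus_one_mem:
  assumes P: "prime_ideal_of R P" and M: "M > 0" "of_int M \<in> P" and y: "y \<in> R" "y \<notin> P"
  obtains n where "n > 0" "y ^ n - 1 \<in> P"
proof -
  have PI: "ideal_of R P" using P unfolding prime_ideal_of_def by blast
  obtain n where n: "n > 0" "cong_mod R (of_int M) (y ^ (2 * n)) (y ^ n)"
    using power_idempotent_mod[OF M(1) y(1)] by blast
  then obtain w where w: "w \<in> R" "y ^ (2 * n) - y ^ n = of_int M * w"
    unfolding cong_mod_def by blast
  have "y ^ (2 * n) = y ^ n * y ^ n" by (simp add: mult_2 power_add)
  then have "y ^ n * (y ^ n - 1) = w * of_int M"
    using w(2) by (simp add: algebra_simps)
  also have "\<dots> \<in> P" using ideal_mult_left[OF PI w(1) M(2)] .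
  finally have "y ^ n * (y ^ n - 1) \<in> P" .
  moreover have "y ^ n \<notin> P" using prime_ideal_power_mem[OF P y(1)] y(2) by blast
  ultimately have "y ^ n - 1 \<in> P"
    using P power_mem[OF y(1)] diff_mem[OF power_mem[OF y(1)] one_mem]
    unfolding prime_ideal_of_def by blast
  then show thesis using that n(1) by blast
qed

lemma primes_over_subset_if_coprime_subset:
  assumes m1: "ideal_of R m1" "m1 \<noteq> {0}" and m2: "ideal_of R m2"
    and sub: "I_coprime R m2 \<subseteq> I_coprime R m1"
  shows "primes_over R m1 \<subseteq> primes_over R m2"
proof
  fix P assume "P \<in> primes_over R m1"
  then have P: "prime_ideal_of R P" "m1 \<subseteq> P" unfolding primes_over_def by auto
  have PI: "ideal_of R P" using P(1) unfolding prime_ideal_of_def by blast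
  obtain N where N: "N > 0" "of_int N \<in> P" using ideal_contains_pos_int[OF m1] P(2) by blast
  have "m2 \<subseteq> P"
  proof
    fix y assume y: "y \<in> m2"
    show "y \<in> P"
    proof (rule ccontr)
      assume "y \<notin> P"
      then obtain n where n: "n > 0" "y ^ n - 1 \<in> P"
        using prime_power_minus_one_mem[OF P(1) N] y ideal_subset[OF m2] by blast
      have "set_sum P m2 = R"
        using set_sum_eq_carrier[OF PI m2 ideal_uminus[OF PI n(2)] ideal_power[OF m2 y n(1)]]
        by simp
      then have "set_sum P m1 = R" using sub PI unfolding I_coprime_def by blast
      moreover have "set_sum P m1 \<subseteq> P" using set_sum_subset[OF PI _ P(2)] by blast
      ultimately show False using prime_ideal_one_not_mem[OF P(1)] one_mem by blast
    qed
  qed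
  then show "P \<in> primes_over R m2" using P(1) unfolding primes_over_def by blast
qed

lemma primes_over_subset_iff_coprime_subset:
  assumes "ideal_of R m1" "m1 \<noteq> {0}" "ideal_of R m2"
  shows "primes_over R m1 \<subseteq> primes_over R m2 \<longleftrightarrow> I_coprime R m2 \<subseteq> I_coprime R m1"
  using coprime_subset_if_primes_over_subset primes_over_subset_if_coprime_subset assms by blast

lemma ideal_finite_residues:
  assumes "M > 0" "m \<subseteq> R"
  obtains S where "finite S" "S \<subseteq> m" "\<forall>a\<in>m. \<exists>s\<in>S. cong_mod R (of_int M) a s"
proof -
  obtain F where F: "finite F" "\<forall>y\<in>R. \<exists>f\<in>F. cong_mod R (of_int M) y f"
    using finite_residues assms(1) by blast
  define rep where "rep f = (SOME a. a \<in> m \<and> cong_mod R (of_int M) a f)" for f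
  have rep: "rep f \<in> m \<and> cong_mod R (of_int M) (rep f) f"
    if "\<exists>a\<in>m. cong_mod R (of_int M) a f" for f
    unfolding rep_def by (rule someI_ex) (use that in blast)
  define S where "S = rep ` {f\<in>F. \<exists>a\<in>m. cong_mod R (of_int M) a f}"
  have "\<exists>s\<in>S. cong_mod R (of_int M) a s" if "a \<in> m" for a
  proof -
    have "a \<in> R" using assms(2) that by blast
    then obtain f where f: "f \<in> F" "cong_mod R (of_int M) a f" using F(2) by blast
    with that have "f \<in> {f\<in>F. \<exists>a\<in>m. cong_mod R (of_int M) a f}" by blast
    then have "rep f \<in> S" "cong_mod R (of_int M) (rep f) f"
      unfolding S_def using rep by auto
    then show ?thesis using cong_mod_trans[OF f(2) cong_mod_sym[of _ "rep f" f]] by blast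
  qed
  moreover have "finite S" unfolding S_def using F(1) by simp
  moreover have "S \<subseteq> m" unfolding S_def using rep by blast
  ultimately show thesis using that by blast
qed

lemma idempotent_absorbing_insert:
  assumes M: "M > 0" and m: "ideal_of R m" and s: "s \<in> m"
    and E: "E \<in> m" "cong_mod R (of_int M) (E ^ 2) E"
  obtains E' where "E' \<in> m" "cong_mod R (of_int M) (E' ^ 2) E'"
    "\<exists>k>0. cong_mod R (of_int M) (s ^ k * E') (s ^ k)"
    "\<And>x. cong_mod R (of_int M) (x * E) x \<Longrightarrow> cong_mod R (of_int M) (x * E') x"
proof -
  have sR: "s \<in> R" and ER: "E \<in> R" using s E(1) ideal_subset[OF m] by auto
  obtain n where n: "n > 0" "cong_mod R (of_int M) (s ^ (2 * n)) (s ^ n)"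
    using power_idempotent_mod[OF M sR] by blast
  define e where "e = s ^ n"
  have em: "e \<in> m" unfolding e_def using ideal_power[OF m s n(1)] .
  have eR: "e \<in> R" using em ideal_subset[OF m] by blast
  have e: "cong_mod R (of_int M) (e ^ 2) e"
    using n(2) unfolding e_def by (simp add: power_mult[symmetric] mult.commute)
  define E' where "E' = E + e - E * e"
  show thesis
  proof (rule that)
    show "E' \<in> m"
      unfolding E'_def using ideal_add[OF m E(1) em] ideal_mult_right[OF m eR E(1)]
      by (rule ideal_diff[OF m])
    show "cong_mod R (of_int M) (E' ^ 2) E'"
      unfolding E'_def using idempotent_mod_join[OF of_int_mem ER eR E(2) e] .
    have "cong_mod R (of_int M) (e * e) e" using e by (simp add: power2_eq_square)
    then have "cong_mod R (of_int M) (e * (e + E - e * E)) e"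
      by (rule absorbs_mod_join[OF ER])
    then have "cong_mod R (of_int M) (s ^ n * E') (s ^ n)"
      unfolding E'_def e_def by (simp add: algebra_simps)
    then show "\<exists>k>0. cong_mod R (of_int M) (s ^ k * E') (s ^ k)" using n(1) by blast
    show "cong_mod R (of_int M) (x * E') x" if "cong_mod R (of_int M) (x * E) x" for x
      unfolding E'_def using absorbs_mod_join[OF eR that] .
  qed
qed

lemma exists_idempotent_absorbing_finite:
  assumes M: "M > 0" and m: "ideal_of R m" and T: "finite T" "T \<subseteq> m"
  shows "\<exists>E\<in>m. cong_mod R (of_int M) (E ^ 2) E
    \<and> (\<forall>s\<in>T. \<exists>k>0. cong_mod R (of_int M) (s ^ k * E) (s ^ k))"
  using T
proof (induction T rule: finite_induct)
  case empty
  show ?case using ideal_zero[OF m] by (intro bexI[of _ 0]) (simp_all add: cong_mod_refl)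
next
  case (insert s T)
  then obtain E where E: "E \<in> m" "cong_mod R (of_int M) (E ^ 2) E"
      "\<forall>t\<in>T. \<exists>k>0. cong_mod R (of_int M) (t ^ k * E) (t ^ k)"
    by blast
  obtain E' where E': "E' \<in> m" "cong_mod R (of_int M) (E' ^ 2) E'"
      "\<exists>k>0. cong_mod R (of_int M) (s ^ k * E') (s ^ k)"
    and absorb: "\<And>x. cong_mod R (of_int M) (x * E) x \<Longrightarrow> cong_mod R (of_int M) (x * E') x"
    using idempotent_absorbing_insert[OF M m _ E(1,2)] insert.prems by blast
  have "\<forall>t\<in>T. \<exists>k>0. cong_mod R (of_int M) (t ^ k * E') (t ^ k)"
    using E(3) absorb by blast
  then show ?case using E' by blast
qed

lemma exists_idempotent_absorbing:
  assumes M: "M > 0" and m: "ideal_of R m"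
  obtains E where "E \<in> m" "cong_mod R (of_int M) (E ^ 2) E"
    "\<forall>a\<in>m. \<exists>k>0. cong_mod R (of_int M) (a ^ k * E) (a ^ k)"
proof -
  obtain S where S: "finite S" "S \<subseteq> m" "\<forall>a\<in>m. \<exists>s\<in>S. cong_mod R (of_int M) a s"
    using ideal_finite_residues[OF M ideal_subset[OF m]] by blast
  obtain E where E: "E \<in> m" "cong_mod R (of_int M) (E ^ 2) E"
      "\<forall>s\<in>S. \<exists>k>0. cong_mod R (of_int M) (s ^ k * E) (s ^ k)"
    using exists_idempotent_absorbing_finite[OF M m S(1,2)] by blast
  have "\<exists>k>0. cong_mod R (of_int M) (a ^ k * E) (a ^ k)" if a: "a \<in> m" for a
  proof -
    obtain s where s: "s \<in> S" "cong_mod R (of_int M) a s" using S(3) a by blast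
    then obtain k where k: "k > 0" "cong_mod R (of_int M) (s ^ k * E) (s ^ k)" using E(3) by blast
    have aR: "a \<in> R" "s \<in> R" "E \<in> R" using a s(1) S(2) E(1) ideal_subset[OF m] by auto
    have as: "cong_mod R (of_int M) (a ^ k) (s ^ k)" using cong_mod_power[OF aR(1,2) s(2)] .
    have "cong_mod R (of_int M) (E * a ^ k) (E * s ^ k)" using cong_mod_mult[OF aR(3) as] .
    then have "cong_mod R (of_int M) (a ^ k * E) (s ^ k * E)" by (simp add: mult.commute)
    then have "cong_mod R (of_int M) (a ^ k * E) (a ^ k)"
      using cong_mod_trans[OF cong_mod_trans[OF _ k(2)] cong_mod_sym[OF as]] by blast
    then show ?thesis using k(1) by blast
  qed
  then show thesis using that E(1,2) by blast
qed

lemma exists_invertible_ideal_same_primes: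
  assumes m: "ideal_of R m" "m \<noteq> {0}"
  obtains mt where "mt \<in> I_inv R" "mt \<subseteq> m" "primes_over R mt = primes_over R m"
proof -
  obtain N where N: "N > 0" "of_int N \<in> m" using ideal_contains_pos_int[OF m] by blast
  define n :: complex where "n = of_int N"
  have n: "n \<in> R" "n \<noteq> 0" "n \<in> m" using N unfolding n_def by auto
  obtain E where E: "E \<in> m" "cong_mod R (n * n) (E ^ 2) E"
      "\<forall>a\<in>m. \<exists>k>0. cong_mod R (n * n) (a ^ k * E) (a ^ k)"
    using exists_idempotent_absorbing[of "N * N" m] N(1) m(1) unfolding n_def by auto
  have ER: "E \<in> R" using E(1) ideal_subset[OF m(1)] by blast
  define mt where "mt = set_sum (principal R (n * (1 - E) + E)) (principal R (n * n))"
  have "n * (1 - E) + E \<in> m" "n * n \<in> m"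
    using ideal_add[OF m(1) ideal_mult_right[OF m(1) _ n(3)] E(1)] ideal_mult_right[OF m(1) n(1,3)] ER
    by (simp_all add: diff_mem)
  then have "mt \<subseteq> m" unfolding mt_def using set_sum_subset[OF m(1)] principal_subset_ideal[OF m(1)] by simp
  moreover have "mt \<in> I_inv R" unfolding mt_def using two_generated_invertible[OF n(1,2) ER E(2)] .
  moreover have "primes_over R mt \<subseteq> primes_over R m"
    unfolding mt_def using primes_over_two_generated_subset[OF m(1) n(1) ER E(3)] .
  moreover have "primes_over R m \<subseteq> primes_over R mt"
    using \<open>mt \<subseteq> m\<close> unfolding primes_over_def by blast
  ultimately show thesis using that by blast
qed

end

section \<open>Orders\<close>

lemma rat_basis_dependent:
  fixes v :: "nat \<Rightarrow> complex"
  assumes b: "rat_basis K n b" and v: "\<forall>i\<le>n. v i \<in> K"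
  shows "\<exists>c. (\<Sum>i\<le>n. of_rat (c i) * v i) = 0 \<and> (\<exists>i\<le>n. c i \<noteq> 0)"
proof -
  interpret Q: vector_space "\<lambda>(r::rat) (z::complex). of_rat r * z"
    by unfold_locales (auto simp: algebra_simps of_rat_add of_rat_mult)
  show ?thesis
  proof (cases "inj_on v {..n}")
    case False
    then obtain i j where ij: "i \<le> n" "j \<le> n" "i \<noteq> j" "v i = v j"
      unfolding inj_on_def by auto
    define c :: "nat \<Rightarrow> rat" where "c k = (if k = i then 1 else if k = j then - 1 else 0)" for k
    have "(\<Sum>k\<le>n. of_rat (c k) * v k) = (\<Sum>k\<in>{i, j}. of_rat (c k) * v k)"
      using ij(1,2) by (intro sum.mono_neutral_right) (auto simp: c_def)
    also have "\<dots> = v i - v j" using ij(3) by (simp add: c_def)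
    finally have "(\<Sum>k\<le>n. of_rat (c k) * v k) = 0" using ij(4) by simp
    moreover have "c i \<noteq> 0" by (simp add: c_def)
    ultimately show ?thesis using ij(1) by blast
  next
    case True
    define S where "S = v ` {..n}"
    have "card S = Suc n" unfolding S_def using True by (simp add: card_image)
    have "S \<subseteq> Q.span (b ` {..<n})"
    proof
      fix y assume "y \<in> S"
      then have "y \<in> K" unfolding S_def using v by auto
      then obtain c where "y = (\<Sum>i<n. of_rat (c i) * b i)"
        using b unfolding rat_basis_def by blast
      moreover have "(\<Sum>i<n. of_rat (c i) * b i) \<in> Q.span (b ` {..<n})"
        by (intro Q.span_sum Q.span_scale Q.span_base) auto
      ultimately show "y \<in> Q.span (b ` {..<n})" by simp
    qed
    moreover have "card (b ` {..<n}) \<le> n" using card_image_le[of "{..<n}" b] by simp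
    ultimately have "Q.dependent S"
      using Q.independent_span_bound[of "b ` {..<n}" S] \<open>card S = Suc n\<close> by auto
    then obtain u where u: "\<exists>y\<in>S. u y \<noteq> 0" "(\<Sum>y\<in>S. of_rat (u y) * y) = 0"
      using Q.dependent_finite[of S] unfolding S_def by auto
    have "(\<Sum>i\<le>n. of_rat (u (v i)) * v i) = 0"
      using u(2) unfolding S_def by (simp add: sum.reindex[OF True])
    moreover have "\<exists>i\<le>n. u (v i) \<noteq> 0" using u(1) unfolding S_def by auto
    ultimately show ?thesis by (intro exI[of _ "\<lambda>i. u (v i)"]) simp
  qed
qed

lemma quotient_of_denom_mult: "quotient_of r = (p, q) \<Longrightarrow> of_int q * r = of_int p"
  using quotient_of_div[of r p q] quotient_of_denom_pos[of r p q] by simp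

lemma rat_common_denominator:
  fixes c :: "nat \<Rightarrow> rat"
  shows "\<exists>d a. d > (0::int) \<and> (\<forall>i\<le>n. of_int d * c i = of_int (a i))"
proof (induction n)
  case 0
  obtain p q where "quotient_of (c 0) = (p, q)" by fastforce
  then have "q > 0" "of_int q * c 0 = of_int p"
    using quotient_of_denom_pos quotient_of_denom_mult by blast+
  then show ?case by (intro exI[of _ q] exI[of _ "\<lambda>_. p"]) simp
next
  case (Suc n)
  then obtain d a where da: "d > 0" "\<forall>i\<le>n. of_int d * c i = of_int (a i)" by blast
  obtain p q where "quotient_of (c (Suc n)) = (p, q)" by fastforce
  then have pq: "q > 0" "of_int q * c (Suc n) = of_int p"
    using quotient_of_denom_pos quotient_of_denom_mult by blast+
  define a' where "a' i = (if i \<le> n then q * a i else d * p)" for i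
  have "of_int (d * q) * c i = of_int (a' i)" if "i \<le> Suc n" for i
  proof (cases "i \<le> n")
    case True
    then show ?thesis using da(2) unfolding a'_def by (simp add: mult.commute mult.left_commute)
  next
    case False
    then have "i = Suc n" using that by simp
    then show ?thesis using pq(2) False unfolding a'_def by (simp add: mult.assoc)
  qed
  then show ?case using da(1) pq(1) by (intro exI[of _ "d * q"] exI[of _ a']) simp
qed

lemma (in complex_subring) divides_nonzero_int_if_relation:
  assumes x: "x \<in> R" "x \<noteq> 0"
  shows "(\<Sum>i\<le>n. of_int (a i) * x ^ i) = 0 \<Longrightarrow> \<exists>i\<le>n. a i \<noteq> 0 \<Longrightarrow>
    \<exists>D w. D \<noteq> (0::int) \<and> w \<in> R \<and> of_int D = x * w"
proof (induction n arbitrary: a)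
  case 0
  then show ?case using x by auto
next
  case (Suc n)
  define w where "w = (\<Sum>i\<le>n. of_int (a (Suc i)) * x ^ i)"
  have w: "w \<in> R" unfolding w_def by (intro sum_mem mult_mem of_int_mem power_mem x(1))
  have split: "(\<Sum>i\<le>Suc n. of_int (a i) * x ^ i) = of_int (a 0) + x * w"
    unfolding w_def by (subst sum.atMost_Suc_shift) (simp add: sum_distrib_left algebra_simps del: sum.atMost_Suc)
  show ?case
  proof (cases "a 0 = 0")
    case False
    have "of_int (a 0) = x * (- w)" using Suc.prems(1) split by (simp add: add_eq_0_iff)
    then show ?thesis using False uminus_mem[OF w] by blast
  next
    case True
    then have "(\<Sum>i\<le>n. of_int (a (Suc i)) * x ^ i) = 0" using Suc.prems(1) split x(2) w_def by simp
    moreover have "\<exists>i\<le>n. a (Suc i) \<noteq> 0"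
    proof -
      obtain i where "i \<le> Suc n" "a i \<noteq> 0" using Suc.prems(2) by blast
      then show ?thesis using True by (cases i) auto
    qed
    ultimately show ?thesis using Suc.IH[of "\<lambda>i. a (Suc i)"] by simp
  qed
qed

lemma order_in_complex_subring: "order_in R K \<Longrightarrow> complex_subring R"
  unfolding order_in_def complex_subring_def by blast

lemma int_basis_finite_residues:
  assumes b: "int_basis R n b" and M: "M > 0"
  shows "\<exists>F. finite F \<and> (\<forall>y\<in>R. \<exists>f\<in>F. cong_mod R (of_int M) y f)"
proof -
  have R: "R = range (\<lambda>c :: nat \<Rightarrow> int. \<Sum>i<n. of_int (c i) * b i)"
    using b unfolding int_basis_def by blast
  define F where "F = (\<lambda>l. \<Sum>i<n. of_int (l ! i) * b i) ` {l. set l \<subseteq> {0..<M} \<and> length l = n}"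
  have "finite F" unfolding F_def by (intro finite_imageI finite_lists_length_eq) auto
  moreover have "\<exists>f\<in>F. cong_mod R (of_int M) y f" if "y \<in> R" for y
  proof -
    obtain c where y: "y = (\<Sum>i<n. of_int (c i) * b i)" using \<open>y \<in> R\<close> R by blast
    define l where "l = map (\<lambda>i. c i mod M) [0..<n]"
    have "set l \<subseteq> {0..<M} \<and> length l = n" unfolding l_def using M by auto
    then have f: "(\<Sum>i<n. of_int (c i mod M) * b i) \<in> F"
      unfolding F_def l_def by (auto intro!: image_eqI[of _ _ "map (\<lambda>i. c i mod M) [0..<n]"])
    have "y - (\<Sum>i<n. of_int (c i mod M) * b i) = (\<Sum>i<n. of_int (c i - c i mod M) * b i)"
      unfolding y by (simp add: sum_subtractf[symmetric] left_diff_distrib)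
    also have "\<dots> = of_int M * (\<Sum>i<n. of_int (c i div M) * b i)"
      by (simp add: minus_mod_eq_mult_div sum_distrib_left mult.assoc)
    finally have "y - (\<Sum>i<n. of_int (c i mod M) * b i) = of_int M * (\<Sum>i<n. of_int (c i div M) * b i)" .
    moreover have "(\<Sum>i<n. of_int (c i div M) * b i) \<in> R" by (subst R) (rule rangeI)
    ultimately show ?thesis using f unfolding cong_mod_def by blast
  qed
  ultimately show ?thesis by blast
qed

lemma order_divides_nonzero_int:
  assumes O: "order_in R K" and x: "x \<in> R" "x \<noteq> 0"
  shows "\<exists>D w. D \<noteq> (0::int) \<and> w \<in> R \<and> of_int D = x * w"
proof -
  interpret complex_subring R using order_in_complex_subring[OF O] .
  obtain n b' where b': "rat_basis K n b'" and RK: "R \<subseteq> K"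
    using O unfolding order_in_def by blast
  have "\<forall>i\<le>n. x ^ i \<in> K" using power_mem[OF x(1)] RK by blast
  then obtain c where c: "(\<Sum>i\<le>n. of_rat (c i) * x ^ i) = 0" "\<exists>i\<le>n. c i \<noteq> 0"
    using rat_basis_dependent[OF b'] by blast
  obtain d a where da: "d > 0" "\<forall>i\<le>n. of_int d * c i = of_int (a i)"
    using rat_common_denominator by blast
  have "(\<Sum>i\<le>n. of_int (a i) * x ^ i) = (\<Sum>i\<le>n. of_int d * (of_rat (c i) * x ^ i))"
  proof (rule sum.cong[OF refl])
    fix i assume "i \<in> {..n}"
    then have "(of_int (a i) :: complex) = of_rat (of_int d * c i)" using da(2) by simp
    then show "of_int (a i) * x ^ i = of_int d * (of_rat (c i) * x ^ i)"
      by (simp add: of_rat_mult)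
  qed
  also have "\<dots> = 0" using c(1) by (simp flip: sum_distrib_left)
  finally have "(\<Sum>i\<le>n. of_int (a i) * x ^ i) = 0" .
  moreover have "\<exists>i\<le>n. a i \<noteq> 0" using c(2) da by fastforce
  ultimately show ?thesis using divides_nonzero_int_if_relation[OF x] by blast
qed

lemma order_finite_residue_subring:
  assumes O: "order_in R K"
  shows "finite_residue_subring R"
proof (intro finite_residue_subring.intro finite_residue_subring_axioms.intro)
  show "complex_subring R" using order_in_complex_subring[OF O] .
  obtain n b where "int_basis R n b" using O unfolding order_in_def by blast
  then show "\<And>M. M > 0 \<Longrightarrow> \<exists>F. finite F \<and> (\<forall>y\<in>R. \<exists>f\<in>F. cong_mod R (of_int M) y f)"
    using int_basis_finite_residues by blast
  show "\<And>x. x \<in> R \<Longrightarrow> x \<noteq> 0 \<Longrightarrow> \<exists>D w. D \<noteq> 0 \<and> w \<in> R \<and> of_int D = x * w"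
    using order_divides_nonzero_int[OF O] by blast
qed

theorem lemma5p9:
  fixes K \<O> m1 m2 :: "complex set"
  assumes "number_field K" and "order_in \<O> K"
    and "ideal_of \<O> m1" and "m1 \<noteq> {0}"
    and "ideal_of \<O> m2" and "m2 \<noteq> {0}"
  shows "({P. prime_ideal_of \<O> P \<and> m1 \<subseteq> P} \<subseteq> {P. prime_ideal_of \<O> P \<and> m2 \<subseteq> P}
            \<longleftrightarrow> I_coprime \<O> m2 \<subseteq> I_coprime \<O> m1)
    \<and> (I_coprime \<O> m2 \<subseteq> I_coprime \<O> m1 \<longrightarrow> J_coprime \<O> K m2 \<subseteq> J_coprime \<O> K m1)
    \<and> (\<forall>m. ideal_of \<O> m \<and> m \<noteq> {0} \<longrightarrow>
         (\<exists>mt. mt \<in> I_inv \<O> \<and> mt \<subseteq> m \<and> I_coprime \<O> m = I_coprime \<O> mt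
               \<and> J_coprime \<O> K m = J_coprime \<O> K mt))"
proof (intro conjI allI impI)
  interpret finite_residue_subring \<O>
    using order_finite_residue_subring[OF assms(2)] .
  show "{P. prime_ideal_of \<O> P \<and> m1 \<subseteq> P} \<subseteq> {P. prime_ideal_of \<O> P \<and> m2 \<subseteq> P}
      \<longleftrightarrow> I_coprime \<O> m2 \<subseteq> I_coprime \<O> m1"
    using primes_over_subset_iff_coprime_subset[OF assms(3-5)] unfolding primes_over_def .
  show "I_coprime \<O> m2 \<subseteq> I_coprime \<O> m1 \<Longrightarrow> J_coprime \<O> K m2 \<subseteq> J_coprime \<O> K m1"
    by (rule J_coprime_mono)
  fix m assume m: "ideal_of \<O> m \<and> m \<noteq> {0}"
  then obtain mt where mt: "mt \<in> I_inv \<O>" "mt \<subseteq> m" "primes_over \<O> mt = primes_over \<O> m"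
    using exists_invertible_ideal_same_primes by blast
  have "ideal_of \<O> mt" using mt(1) unfolding I_inv_def by blast
  then have "I_coprime \<O> m = I_coprime \<O> mt"
    using coprime_subset_if_primes_over_subset m mt(3) by blast
  then show "\<exists>mt. mt \<in> I_inv \<O> \<and> mt \<subseteq> m \<and> I_coprime \<O> m = I_coprime \<O> mt
      \<and> J_coprime \<O> K m = J_coprime \<O> K mt"
    using mt(1,2) J_coprime_mono by blast
qed

end
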